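(* Let $A \subset \mathbb{Z}^d$ consist of exactly $d+2$ points, contain $0$, and generate $\mathbb{Z}^d$ additively. Denote the nonzero elements of $A$ by $v_0, v_1, \ldots, v_d$, where $v_1, \ldots, v_d$ are linearly independent. For integers $k$ let $C_k = \{\sum_{i=1}^d n_i v_i : n_i \in \mathbb{N}, \ \sum_{i=1}^d n_i \leq k\}$, with $C_k := \emptyset$ for $k < 0$, and for integers $j, h \geq 0$ let $A_{j,h} = j v_0 + C_{h-j}$. Let $\Gamma = \mathrm{span}_{\mathbb{N}}\{v_1,\ldots,v_d\}$, let $N$ be the order of $v_0$ in $\mathbb{Z}^d / \mathrm{span}_{\mathbb{Z}}\{v_1,\ldots,v_d\}$, and let $w \in \Gamma$ be the point with $\Gamma \cap (N v_0 + \Gamma) = w + \Gamma$ (explicitly, if $N v_0 = \sum_{i=1}^d c_i v_i$ with $c_i \in \mathbb{Z}$, then $w = \sum_{i=1}^d \max(c_i,0) v_i$). Let \[ H = \max\{\ell : A_{j,h} \cap A_{j',h} = \emptyset \text{ whenever } j \neq j' \text{ and } h < \ell\}, \] which is a finite integer. Then for all $a, j, h \in \mathbb{N}$, \[ A_{j,h} \cap A_{j+aN,h} = j v_0 + a w + C_{h - j - aH}. \]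
   Context: $\mathbb{N} = \{0,1,2,\ldots\}$; in the definition of $H$, $j,j',h$ range over nonnegative integers. For a vector $x$ and set $S$, $x + S = \{x + s : s \in S\}$. *)

theory Defs
  imports "HOL-Analysis.Analysis"
begin

text \<open>Points of Z^d are vectors of type int^'d, with d = CARD('d).
  The vectors v_1..v_d are indexed by the type 'd itself.\<close>

definition Cset :: "('d::finite \<Rightarrow> int^'d) \<Rightarrow> int \<Rightarrow> (int^'d) set" where
  "Cset v k = {(\<Sum>i\<in>UNIV. of_nat (n i) *s v i) | n :: 'd \<Rightarrow> nat. int (\<Sum>i\<in>UNIV. n i) \<le> k}"

definition Aset :: "int^'d \<Rightarrow> ('d::finite \<Rightarrow> int^'d) \<Rightarrow> nat \<Rightarrow> nat \<Rightarrow> (int^'d) set" where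
  "Aset v0 v j h = (\<lambda>x. of_nat j *s v0 + x) ` Cset v (int h - int j)"

definition Gamma :: "('d::finite \<Rightarrow> int^'d) \<Rightarrow> (int^'d) set" where
  "Gamma v = {(\<Sum>i\<in>UNIV. of_nat (n i) *s v i) | n :: 'd \<Rightarrow> nat. True}"

definition zspan :: "('d::finite \<Rightarrow> int^'d) \<Rightarrow> (int^'d) set" where
  "zspan v = {(\<Sum>i\<in>UNIV. c i *s v i) | c :: 'd \<Rightarrow> int. True}"

definition ordv :: "int^'d \<Rightarrow> ('d::finite \<Rightarrow> int^'d) \<Rightarrow> nat" where
  "ordv v0 v = (LEAST N::nat. 0 < N \<and> of_nat N *s v0 \<in> zspan v)"

definition wpt :: "int^'d \<Rightarrow> ('d::finite \<Rightarrow> int^'d) \<Rightarrow> int^'d" where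
  "wpt v0 v = (THE w. w \<in> Gamma v \<and>
      Gamma v \<inter> ((\<lambda>x. of_nat (ordv v0 v) *s v0 + x) ` Gamma v) = (\<lambda>x. w + x) ` Gamma v)"

definition Hval :: "int^'d \<Rightarrow> ('d::finite \<Rightarrow> int^'d) \<Rightarrow> int" where
  "Hval v0 v = (GREATEST l::int. \<forall>j j' h :: nat. j \<noteq> j' \<and> int h < l \<longrightarrow>
      Aset v0 v j h \<inter> Aset v0 v j' h = {})"

end

theory Submission
  imports Defs
begin

text \<open>Write points of \<open>\<Gamma>\<close> in the coordinates of the basis \<open>v\<^sub>1, \<dots>, v\<^sub>d\<close> and let
  \<open>N v\<^sub>0 = \<Sum> c\<^sub>i v\<^sub>i\<close>. A point with coordinates \<open>g\<close> lies in \<open>C\<^sub>k \<inter> (a N v\<^sub>0 + C\<^sub>l)\<close> iff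
  \<open>g \<ge> max (a c) 0\<close>, \<open>\<Sum> g \<le> k\<close> and \<open>\<Sum> (g - a c) \<le> l\<close>, i.e. iff \<open>g = a c\<^sup>+ + e\<close> with \<open>e \<ge> 0\<close>
  and \<open>\<Sum> e \<le> min (k - a \<Sum> c\<^sup>+) (l - a \<Sum> c\<^sup>-)\<close>. For \<open>k = h - j\<close>, \<open>l = k - a N\<close> this is the
  claimed formula with \<open>w = \<Sum> c\<^sup>+\<^sub>i v\<^sub>i\<close> and \<open>H = max (\<Sum> c\<^sup>+) (\<Sum> c\<^sup>- + N)\<close>. Since \<open>A\<^sub>j\<^sub>,\<^sub>h\<close> and
  \<open>A\<^sub>j\<^sub>'\<^sub>,\<^sub>h\<close> can only meet when \<open>N\<close> divides \<open>j' - j\<close>, the formula also shows that this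
  number is the maximum defining \<open>H\<close>.\<close>

definition int_indep :: "('d::finite \<Rightarrow> int^'d) \<Rightarrow> bool" where
  "int_indep v \<longleftrightarrow> (\<forall>c. (\<Sum>i\<in>UNIV. c i *s v i) = 0 \<longrightarrow> (\<forall>i. c i = 0))"

definition int_comb :: "('d::finite \<Rightarrow> int^'d) \<Rightarrow> ('d \<Rightarrow> int) \<Rightarrow> int^'d" where
  "int_comb v c = (\<Sum>i\<in>UNIV. c i *s v i)"

definition pos_part :: "('d \<Rightarrow> int) \<Rightarrow> 'd \<Rightarrow> int" where
  "pos_part c = (\<lambda>i. max (c i) 0)"

definition neg_part :: "('d \<Rightarrow> int) \<Rightarrow> 'd \<Rightarrow> int" where
  "neg_part c = (\<lambda>i. max (- c i) 0)"

lemma translate_mem_iff: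
  fixes a :: "'a::ab_group_add"
  shows "x \<in> (+) a ` S \<longleftrightarrow> x - a \<in> S"
  by (auto simp: image_iff intro: bexI[of _ "x - a"])

lemma int_comb_add: "int_comb v (\<lambda>i. c i + c' i) = int_comb v c + int_comb v c'"
  unfolding int_comb_def by (simp add: vector_sadd_rdistrib sum.distrib)

lemma int_comb_diff: "int_comb v (\<lambda>i. c i - c' i) = int_comb v c - int_comb v c'"
  unfolding int_comb_def by (simp add: vec_eq_iff sum_subtractf left_diff_distrib)

lemma int_comb_smult: "int_comb v (\<lambda>i. k * c i) = k *s int_comb v c"
  unfolding int_comb_def by (simp add: vec_eq_iff sum_distrib_left mult.assoc)

lemma int_comb_zero: "int_comb v (\<lambda>i. 0) = 0"
  unfolding int_comb_def by (simp add: vec_eq_iff)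

lemma int_indep_coeff_zero:
  assumes "int_indep v" "int_comb v c = 0"
  shows "c = (\<lambda>i. 0)"
proof -
  have "\<forall>i. c i = 0" using assms unfolding int_indep_def int_comb_def by blast
  then show ?thesis by auto
qed

lemma int_comb_eq_iff:
  assumes "int_indep v"
  shows "int_comb v c = int_comb v c' \<longleftrightarrow> c = c'"
proof
  assume "int_comb v c = int_comb v c'"
  then have "int_comb v (\<lambda>i. c i - c' i) = 0" by (simp add: int_comb_diff)
  then have "(\<lambda>i. c i - c' i) = (\<lambda>i. 0)" by (rule int_indep_coeff_zero[OF assms])
  then show "c = c'" by (auto simp: fun_eq_iff)
qed simp

lemma mem_Cset: "x \<in> Cset v k \<longleftrightarrow> (\<exists>c. x = int_comb v c \<and> (\<forall>i. 0 \<le> c i) \<and> sum c UNIV \<le> k)"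
proof
  assume "x \<in> Cset v k"
  then show "\<exists>c. x = int_comb v c \<and> (\<forall>i. 0 \<le> c i) \<and> sum c UNIV \<le> k"
    unfolding Cset_def int_comb_def by (force intro: exI[of _ "\<lambda>i. int (_ i)"])
next
  assume "\<exists>c. x = int_comb v c \<and> (\<forall>i. 0 \<le> c i) \<and> sum c UNIV \<le> k"
  then obtain c where c: "x = int_comb v c" "\<forall>i. 0 \<le> c i" "sum c UNIV \<le> k" by blast
  then have "c = (\<lambda>i. int (nat (c i)))" by auto
  then show "x \<in> Cset v k"
    using c unfolding Cset_def int_comb_def by (intro CollectI exI[of _ "\<lambda>i. nat (c i)"]) simp
qed

lemma int_comb_in_Cset_iff:
  assumes "int_indep v"
  shows "int_comb v c \<in> Cset v k \<longleftrightarrow> (\<forall>i. 0 \<le> c i) \<and> sum c UNIV \<le> k"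
  using int_comb_eq_iff[OF assms] by (auto simp: mem_Cset)

lemma Cset_empty: "k < 0 \<Longrightarrow> Cset v k = {}"
  using sum_nonneg[of UNIV] by (fastforce simp: mem_Cset)

lemma mem_Gamma: "x \<in> Gamma v \<longleftrightarrow> (\<exists>c. x = int_comb v c \<and> (\<forall>i. 0 \<le> c i))"
proof
  assume "x \<in> Gamma v"
  then show "\<exists>c. x = int_comb v c \<and> (\<forall>i. 0 \<le> c i)"
    unfolding Gamma_def int_comb_def by (force intro: exI[of _ "\<lambda>i. int (_ i)"])
next
  assume "\<exists>c. x = int_comb v c \<and> (\<forall>i. 0 \<le> c i)"
  then obtain c where c: "x = int_comb v c" "\<forall>i. 0 \<le> c i" by blast
  then have "c = (\<lambda>i. int (nat (c i)))" by auto
  then show "x \<in> Gamma v"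
    using c unfolding Gamma_def int_comb_def by (intro CollectI exI[of _ "\<lambda>i. nat (c i)"]) simp
qed

lemma int_comb_in_Gamma_iff:
  assumes "int_indep v"
  shows "int_comb v c \<in> Gamma v \<longleftrightarrow> (\<forall>i. 0 \<le> c i)"
  using int_comb_eq_iff[OF assms] by (auto simp: mem_Gamma)

lemma zspan_eq_range: "zspan v = range (int_comb v)"
  unfolding zspan_def int_comb_def by blast

lemma Gamma_pointed:
  assumes "int_indep v" "x \<in> Gamma v" "- x \<in> Gamma v"
  shows "x = 0"
proof -
  obtain g g' where g: "x = int_comb v g" "\<forall>i. 0 \<le> g i" and g': "- x = int_comb v g'" "\<forall>i. 0 \<le> g' i"
    using assms(2,3) unfolding mem_Gamma by metis
  have "int_comb v (\<lambda>i. g i + g' i) = int_comb v (\<lambda>i. 0)"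
    unfolding int_comb_add int_comb_zero using g(1) g'(1) by (metis add.right_inverse)
  then have "g = (\<lambda>i. 0)"
    using g(2) g'(2) by (auto simp: int_comb_eq_iff[OF assms(1)] fun_eq_iff add_nonneg_eq_0_iff)
  then show ?thesis using g(1) by (simp add: int_comb_zero)
qed

lemma translate_Gamma_eq_iff:
  assumes "int_indep v"
  shows "(+) w ` Gamma v = (+) w' ` Gamma v \<longleftrightarrow> w = w'"
proof
  assume eq: "(+) w ` Gamma v = (+) w' ` Gamma v"
  have "0 \<in> Gamma v"
    using int_comb_in_Gamma_iff[OF assms, of "\<lambda>i. 0"] by (simp add: int_comb_zero)
  then have "w \<in> (+) w' ` Gamma v" "w' \<in> (+) w ` Gamma v"
    using eq by (metis add.right_neutral image_eqI)+
  then show "w = w'"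
    using Gamma_pointed[OF assms, of "w - w'"] by (simp add: translate_mem_iff)
qed simp

lemma range_set_eqI:
  assumes "\<And>x. f x \<in> A \<longleftrightarrow> f x \<in> B" "A \<subseteq> range f" "B \<subseteq> range f"
  shows "A = B"
  using assms by blast

lemma Cset_subset_range: "Cset v k \<subseteq> range (int_comb v)"
  by (auto simp: mem_Cset)

lemma Gamma_subset_range: "Gamma v \<subseteq> range (int_comb v)"
  by (auto simp: mem_Gamma)

lemma translate_subset_range:
  assumes "S \<subseteq> range (int_comb v)"
  shows "(+) (int_comb v c) ` S \<subseteq> range (int_comb v)"
proof
  fix x assume "x \<in> (+) (int_comb v c) ` S"
  then obtain g where "x = int_comb v c + int_comb v g" using assms by blast
  then have "x = int_comb v (\<lambda>i. c i + g i)" by (simp add: int_comb_add)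
  then show "x \<in> range (int_comb v)" by blast
qed

lemma pos_part_minus_neg_part [simp]: "pos_part c i - neg_part c i = c i"
  unfolding pos_part_def neg_part_def by simp

lemma pos_part_ge_iff: "g \<ge> pos_part c i \<longleftrightarrow> 0 \<le> g \<and> c i \<le> g"
  unfolding pos_part_def by auto

lemma Cset_Int_translate:
  assumes indep: "int_indep v"
  shows "Cset v k \<inter> (+) (int_comb v c) ` Cset v l =
    (+) (int_comb v (pos_part c)) ` Cset v (min (k - sum (pos_part c) UNIV) (l - sum (neg_part c) UNIV))"
    (is "?L = ?R")
proof -
  have "int_comb v g \<in> ?L \<longleftrightarrow> int_comb v g \<in> ?R" for g
  proof -
    have "sum c UNIV = sum (pos_part c) UNIV - sum (neg_part c) UNIV"
      by (simp flip: sum_subtractf)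
    then have "sum g UNIV - sum (pos_part c) UNIV \<le> min (k - sum (pos_part c) UNIV) (l - sum (neg_part c) UNIV)
        \<longleftrightarrow> sum g UNIV \<le> k \<and> sum g UNIV - sum c UNIV \<le> l"
      by linarith
    moreover have "int_comb v g \<in> ?L \<longleftrightarrow> (\<forall>i. 0 \<le> g i \<and> c i \<le> g i) \<and>
        sum g UNIV \<le> k \<and> sum g UNIV - sum c UNIV \<le> l"
      by (auto simp: translate_mem_iff int_comb_diff[symmetric] int_comb_in_Cset_iff[OF indep]
          sum_subtractf)
    moreover have "int_comb v g \<in> ?R \<longleftrightarrow> (\<forall>i. 0 \<le> g i \<and> c i \<le> g i) \<and>
        sum g UNIV - sum (pos_part c) UNIV \<le> min (k - sum (pos_part c) UNIV) (l - sum (neg_part c) UNIV)"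
      by (simp add: translate_mem_iff int_comb_diff[symmetric] int_comb_in_Cset_iff[OF indep]
          sum_subtractf pos_part_ge_iff)
    ultimately show ?thesis by simp
  qed
  moreover have "?L \<subseteq> range (int_comb v)" "?R \<subseteq> range (int_comb v)"
    using translate_subset_range[OF Cset_subset_range] Cset_subset_range by blast+
  ultimately show ?thesis by (intro range_set_eqI)
qed

lemma Gamma_Int_translate:
  assumes indep: "int_indep v"
  shows "Gamma v \<inter> (+) (int_comb v c) ` Gamma v = (+) (int_comb v (pos_part c)) ` Gamma v"
    (is "?L = ?R")
proof -
  have "int_comb v g \<in> ?L \<longleftrightarrow> int_comb v g \<in> ?R" for g
    by (auto simp: translate_mem_iff int_comb_diff[symmetric] int_comb_in_Gamma_iff[OF indep]
        pos_part_ge_iff)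
  moreover have "?L \<subseteq> range (int_comb v)" "?R \<subseteq> range (int_comb v)"
    using translate_subset_range[OF Gamma_subset_range] Gamma_subset_range by blast+
  ultimately show ?thesis by (intro range_set_eqI)
qed

lemma common_denominator:
  fixes f :: "'a \<Rightarrow> rat"
  assumes "finite F"
  shows "\<exists>D::int. 0 < D \<and> (\<forall>x\<in>F. of_int D * f x \<in> \<int>)"
  using assms
proof (induction F rule: finite_induct)
  case empty
  show ?case by (intro exI[of _ 1]) simp
next
  case (insert y F)
  then obtain D :: int where D: "0 < D" "\<forall>x\<in>F. of_int D * f x \<in> \<int>" by blast
  obtain n d where nd: "quotient_of (f y) = (n, d)" by fastforce
  have d: "0 < d" "of_int d * f y = of_int n"
    using quotient_of_denom_pos[OF nd] quotient_of_div[OF nd] by simp_all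
  have "of_int (D * d) * f x \<in> \<int>" if "x \<in> insert y F" for x
  proof (cases "x = y")
    case True
    have "of_int (D * d) * f y = of_int (D * n)"
      using d(2) by (simp add: mult.assoc)
    then show ?thesis using True by (metis Ints_of_int)
  next
    case False
    then have "of_int D * f x \<in> \<int>" using that D(2) by simp
    then have "of_int d * (of_int D * f x) \<in> \<int>" by (rule Ints_mult[OF Ints_of_int])
    then show ?thesis by (simp add: algebra_simps)
  qed
  then show ?case
    using D(1) d(1) by (intro exI[of _ "D * d"]) simp
qed

definition of_int_vec :: "int^'n \<Rightarrow> rat^'n" where
  "of_int_vec x = (\<chi> k. of_int (x $ k))"

lemma of_int_vec_eq_iff [simp]: "of_int_vec x = of_int_vec y \<longleftrightarrow> x = y"
  by (simp add: of_int_vec_def vec_eq_iff)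

lemma of_int_vec_lincomb:
  "of_int_vec (\<Sum>s\<in>S. c s *s s) = (\<Sum>s\<in>S. of_int (c s) *s of_int_vec s)"
  by (simp add: of_int_vec_def vec_eq_iff)

lemma int_dependent_if_card_gt:
  fixes S :: "(int^'n) set"
  assumes fin: "finite S" and card: "CARD('n) < card S"
  shows "\<exists>c. (\<exists>s\<in>S. c s \<noteq> 0) \<and> (\<Sum>s\<in>S. c s *s s) = 0"
proof -
  have inj: "inj_on of_int_vec S" by (simp add: inj_on_def)
  have "vec.dependent (of_int_vec ` S)"
    using card dim_subset_UNIV_cart_gen[of "of_int_vec ` S"] card_image[OF inj]
    by (intro vec.dependent_biggerset_general) simp
  then obtain q where q: "\<exists>s\<in>S. q (of_int_vec s) \<noteq> 0"
      "(\<Sum>s\<in>S. q (of_int_vec s) *s of_int_vec s) = 0"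
    using fin by (auto simp: vec.dependent_finite sum.reindex[OF inj])
  obtain D :: int where D: "0 < D" "\<forall>s\<in>S. of_int D * q (of_int_vec s) \<in> \<int>"
    using common_denominator[where f = "\<lambda>s. q (of_int_vec s)", OF fin] by blast
  then have "\<forall>s\<in>S. \<exists>z. of_int z = of_int D * q (of_int_vec s)"
    by (metis Ints_cases)
  then have "\<exists>c. \<forall>s\<in>S. of_int (c s) = of_int D * q (of_int_vec s)"
    by (rule bchoice)
  then obtain c where c: "\<forall>s\<in>S. of_int (c s) = of_int D * q (of_int_vec s)"
    by blast
  have "of_int_vec (\<Sum>s\<in>S. c s *s s) = of_int D *s (\<Sum>s\<in>S. q (of_int_vec s) *s of_int_vec s)"
    using c by (simp add: of_int_vec_lincomb vec.scale_sum_right vector_smult_assoc)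
  also have "\<dots> = of_int_vec 0"
    using q(2) by (simp add: of_int_vec_def vec_eq_iff)
  finally have "(\<Sum>s\<in>S. c s *s s) = 0" by simp
  moreover obtain s where "s \<in> S" "q (of_int_vec s) \<noteq> 0"
    using q(1) by blast
  then have "\<exists>s\<in>S. c s \<noteq> 0"
    using c D(1) by (intro bexI[of _ s]) auto
  ultimately show ?thesis by blast
qed

lemma int_comb_unit: "int_comb v (\<lambda>k. of_bool (k = i)) = v i"
  by (simp add: int_comb_def vec_eq_iff)

lemma int_indep_inj:
  assumes "int_indep v"
  shows "inj v"
proof
  fix i j assume "v i = v j"
  then have "int_comb v (\<lambda>k. of_bool (k = i) - of_bool (k = j)) = 0"
    by (simp add: int_comb_diff int_comb_unit)
  then have "(\<lambda>k. of_bool (k = i) - of_bool (k = j)) = (\<lambda>k. 0::int)"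
    by (rule int_indep_coeff_zero[OF assms])
  from fun_cong[OF this, of i] show "i = j"
    by (cases "i = j") simp_all
qed

lemma ex_multiple_in_zspan:
  fixes v :: "'d::finite \<Rightarrow> int^'d"
  assumes indep: "int_indep v"
  shows "\<exists>n>0. of_nat n *s v0 \<in> zspan v"
proof (cases "v0 \<in> range v")
  case True
  then obtain i where "v0 = v i" by blast
  then have "of_nat 1 *s v0 = int_comb v (\<lambda>k. of_bool (k = i))"
    by (simp add: int_comb_unit)
  then show ?thesis by (auto simp: zspan_eq_range)
next
  case False
  let ?S = "insert v0 (range v)"
  have "card ?S = CARD('d) + 1"
    using False card_image[OF int_indep_inj[OF indep]] by simp
  then obtain c where c: "\<exists>s\<in>?S. c s \<noteq> 0" "(\<Sum>s\<in>?S. c s *s s) = 0"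
    using int_dependent_if_card_gt[of ?S] by auto
  define m where "m = c v0"
  have rel: "m *s v0 + int_comb v (c \<circ> v) = 0"
    using c(2) False int_indep_inj[OF indep]
    by (simp add: m_def int_comb_def sum.reindex)
  have "m \<noteq> 0"
  proof
    assume "m = 0"
    then have "int_comb v (c \<circ> v) = 0"
      using rel by simp
    then have "c \<circ> v = (\<lambda>i. 0)"
      by (rule int_indep_coeff_zero[OF indep])
    then show False using c(1) \<open>m = 0\<close> by (auto simp: m_def fun_eq_iff)
  qed
  have comb: "int_comb v (c \<circ> v) = - (m *s v0)"
    using rel by (simp add: eq_neg_iff_add_eq_0 add.commute)
  have "sgn m * m = \<bar>m\<bar>"
    by (simp add: abs_sgn mult.commute)
  then have "of_nat (nat \<bar>m\<bar>) *s v0 = (- sgn m) *s int_comb v (c \<circ> v)"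
    unfolding comb by (simp add: vector_smult_lneg vector_smult_rneg vector_smult_assoc)
  also have "\<dots> = int_comb v (\<lambda>i. - sgn m * c (v i))"
    by (simp only: int_comb_smult comp_def)
  finally show ?thesis
    using \<open>m \<noteq> 0\<close> by (intro exI[of _ "nat \<bar>m\<bar>"]) (auto simp: zspan_eq_range)
qed

lemma ordv_pos:
  assumes "int_indep v"
  shows "0 < ordv v0 v"
  using LeastI_ex[OF ex_multiple_in_zspan[OF assms]] unfolding ordv_def by blast

lemma ordv_in_zspan:
  assumes "int_indep v"
  shows "of_nat (ordv v0 v) *s v0 \<in> zspan v"
  using LeastI_ex[OF ex_multiple_in_zspan[OF assms]] unfolding ordv_def by blast

lemma ordv_le: "0 < n \<Longrightarrow> of_nat n *s v0 \<in> zspan v \<Longrightarrow> ordv v0 v \<le> n"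
  unfolding ordv_def by (rule Least_le) simp

lemma ordv_dvd:
  assumes indep: "int_indep v" and n: "of_nat n *s v0 \<in> zspan v"
  shows "ordv v0 v dvd n"
proof -
  let ?N = "ordv v0 v"
  obtain c c' where c: "of_nat n *s v0 = int_comb v c" and c': "of_nat ?N *s v0 = int_comb v c'"
    using n ordv_in_zspan[OF indep] unfolding zspan_eq_range by blast
  have "int (n mod ?N) = int n - int (n div ?N) * int ?N"
    by (metis div_mult_mod_eq add_diff_cancel_left' of_nat_add of_nat_mult)
  then have "of_nat (n mod ?N) *s v0 = of_nat n *s v0 - of_nat (n div ?N) *s (of_nat ?N *s v0)"
    by (simp add: vector_sub_rdistrib vector_smult_assoc)
  also have "\<dots> = int_comb v (\<lambda>i. c i - int (n div ?N) * c' i)"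
    unfolding c c' by (simp add: int_comb_diff int_comb_smult)
  finally have "of_nat (n mod ?N) *s v0 \<in> zspan v"
    unfolding zspan_eq_range by blast
  moreover have "n mod ?N < ?N"
    using ordv_pos[OF indep] by simp
  ultimately have "n mod ?N = 0"
    using ordv_le[of "n mod ?N" v0 v] by (cases "n mod ?N = 0") simp_all
  then show ?thesis by (simp add: dvd_eq_mod_eq_0)
qed

lemma Aset_Int_Aset_shift:
  assumes indep: "int_indep v" and c: "of_nat N *s v0 = int_comb v c"
  shows "Aset v0 v j h \<inter> Aset v0 v (j + a * N) h =
    (\<lambda>x. of_nat j *s v0 + of_nat a *s int_comb v (pos_part c) + x) `
      Cset v (int h - int j - int a * max (sum (pos_part c) UNIV) (sum (neg_part c) UNIV + int N))"
proof -
  let ?ac = "\<lambda>i. int a * c i"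
  let ?k = "int h - int j"
  have shift: "of_nat (j + a * N) *s v0 = of_nat j *s v0 + int_comb v ?ac"
    by (simp add: int_comb_smult vector_sadd_rdistrib vector_smult_assoc flip: c)
  have parts: "pos_part ?ac = (\<lambda>i. int a * pos_part c i)" "neg_part ?ac = (\<lambda>i. int a * neg_part c i)"
    unfolding pos_part_def neg_part_def by (simp_all add: max_mult_distrib_left)
  let ?l = "?k - int a * int N"
  have l: "int h - int (j + a * N) = ?l" by simp
  have budget: "min (?k - sum (pos_part ?ac) UNIV) (?l - sum (neg_part ?ac) UNIV)
      = ?k - int a * max (sum (pos_part c) UNIV) (sum (neg_part c) UNIV + int N)"
  proof -
    have "sum (pos_part ?ac) UNIV = int a * sum (pos_part c) UNIV"
      "sum (neg_part ?ac) UNIV = int a * sum (neg_part c) UNIV"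
      unfolding parts by (simp_all add: sum_distrib_left)
    then show ?thesis
      by (simp add: max_mult_distrib_left distrib_left flip: min_diff_distrib_left)
  qed
  have "Aset v0 v j h \<inter> Aset v0 v (j + a * N) h =
      (+) (of_nat j *s v0) ` (Cset v ?k \<inter> (+) (int_comb v ?ac) ` Cset v ?l)"
    unfolding Aset_def shift l translation_Int by (simp add: image_image add.assoc)
  also have "\<dots> = (+) (of_nat j *s v0) ` (+) (of_nat a *s int_comb v (pos_part c)) `
      Cset v (?k - int a * max (sum (pos_part c) UNIV) (sum (neg_part c) UNIV + int N))"
    unfolding Cset_Int_translate[OF indep] budget by (simp add: parts int_comb_smult)
  finally show ?thesis by (simp add: image_image add.assoc)
qed

lemma Aset_overlap_imp_ordv_dvd:
  assumes indep: "int_indep v" and "Aset v0 v j h \<inter> Aset v0 v (j + k) h \<noteq> {}"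
  shows "ordv v0 v dvd k"
proof -
  have mem_Aset: "\<exists>g. x = of_nat i *s v0 + int_comb v g" if "x \<in> Aset v0 v i h" for x i
    using that unfolding Aset_def by (auto simp: mem_Cset)
  obtain x where "x \<in> Aset v0 v j h" "x \<in> Aset v0 v (j + k) h"
    using assms(2) by blast
  then obtain g g' where "x = of_nat j *s v0 + int_comb v g" "x = of_nat (j + k) *s v0 + int_comb v g'"
    using mem_Aset by meson
  then have "of_nat j *s v0 + int_comb v g = of_nat (j + k) *s v0 + int_comb v g'"
    by simp
  then have "of_nat j *s v0 + int_comb v g = of_nat j *s v0 + (of_nat k *s v0 + int_comb v g')"
    by (simp add: vector_sadd_rdistrib add.assoc)
  then have "of_nat k *s v0 = int_comb v (\<lambda>i. g i - g' i)"
    by (simp add: int_comb_diff eq_diff_eq)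
  then show ?thesis
    using ordv_dvd[OF indep] unfolding zspan_eq_range by blast
qed

lemma Aset_Int_Aset_eq_empty:
  assumes indep: "int_indep v" and c: "of_nat (ordv v0 v) *s v0 = int_comb v c"
    and "j \<noteq> j'" and h: "int h < max (sum (pos_part c) UNIV) (sum (neg_part c) UNIV + int (ordv v0 v))"
  shows "Aset v0 v j h \<inter> Aset v0 v j' h = {}"
proof -
  let ?N = "ordv v0 v"
  let ?M = "max (sum (pos_part c) UNIV) (sum (neg_part c) UNIV + int ?N)"
  have "Aset v0 v j h \<inter> Aset v0 v (j + k) h = {}" if "0 < k" for j k
  proof (rule ccontr)
    assume overlap: "Aset v0 v j h \<inter> Aset v0 v (j + k) h \<noteq> {}"
    then obtain a where k: "k = a * ?N"
      using Aset_overlap_imp_ordv_dvd[OF indep] by (metis dvdE mult.commute)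
    then have "1 \<le> a" using \<open>0 < k\<close> by (cases a) auto
    moreover have "0 \<le> sum (neg_part c) UNIV"
      by (rule sum_nonneg) (simp add: neg_part_def)
    ultimately have "?M \<le> int a * ?M"
      using mult_right_mono[of 1 "int a" ?M] by simp
    then have "Cset v (int h - int j - int a * ?M) = {}"
      using h by (intro Cset_empty) linarith
    then show False
      using overlap unfolding k Aset_Int_Aset_shift[OF indep c] by simp
  qed
  from this[of "j' - j" j] this[of "j - j'" j'] show ?thesis
    using \<open>j \<noteq> j'\<close> by (cases "j < j'") (auto simp: Int_commute)
qed

lemma Hval_eq:
  assumes indep: "int_indep v" and c: "of_nat (ordv v0 v) *s v0 = int_comb v c"
  shows "Hval v0 v = max (sum (pos_part c) UNIV) (sum (neg_part c) UNIV + int (ordv v0 v))"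
    (is "_ = ?M")
proof -
  let ?N = "ordv v0 v"
  have "0 \<le> sum (neg_part c) UNIV"
    by (rule sum_nonneg) (simp add: neg_part_def)
  then have M_nonneg: "0 \<le> ?M" by linarith
  have "0 \<in> Cset v (int (nat ?M) - int 0 - int 1 * ?M)"
    using int_comb_in_Cset_iff[OF indep, of "\<lambda>i. 0"] M_nonneg by (simp add: int_comb_zero)
  then have overlap: "Aset v0 v 0 (nat ?M) \<inter> Aset v0 v (0 + 1 * ?N) (nat ?M) \<noteq> {}"
    unfolding Aset_Int_Aset_shift[OF indep c] by blast
  show ?thesis
    unfolding Hval_def
  proof (rule Greatest_equality)
    show "\<forall>j j' h. j \<noteq> j' \<and> int h < ?M \<longrightarrow> Aset v0 v j h \<inter> Aset v0 v j' h = {}"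
      using Aset_Int_Aset_eq_empty[OF indep c] by blast
  next
    fix l assume disjoint_below_l:
      "\<forall>j j' h. j \<noteq> j' \<and> int h < l \<longrightarrow> Aset v0 v j h \<inter> Aset v0 v j' h = {}"
    show "l \<le> ?M"
    proof (rule ccontr)
      assume "\<not> l \<le> ?M"
      then have "int (nat ?M) < l" using M_nonneg by (simp add: not_le)
      then have "Aset v0 v 0 (nat ?M) \<inter> Aset v0 v (0 + 1 * ?N) (nat ?M) = {}"
        using disjoint_below_l ordv_pos[OF indep, of v0] by simp
      then show False using overlap by blast
    qed
  qed
qed

lemma wpt_eq:
  assumes indep: "int_indep v" and c: "of_nat (ordv v0 v) *s v0 = int_comb v c"
  shows "wpt v0 v = int_comb v (pos_part c)"
  unfolding wpt_def c
proof (rule the_equality)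
  show "int_comb v (pos_part c) \<in> Gamma v \<and>
      Gamma v \<inter> (+) (int_comb v c) ` Gamma v = (+) (int_comb v (pos_part c)) ` Gamma v"
    using Gamma_Int_translate[OF indep] int_comb_in_Gamma_iff[OF indep] by (simp add: pos_part_def)
next
  fix w assume "w \<in> Gamma v \<and> Gamma v \<inter> (+) (int_comb v c) ` Gamma v = (+) w ` Gamma v"
  then show "w = int_comb v (pos_part c)"
    using Gamma_Int_translate[OF indep] translate_Gamma_eq_iff[OF indep] by simp
qed

theorem lemma6p2:
  fixes v0 :: "int^'d" and v :: "'d \<Rightarrow> int^'d"
  assumes card_A: "card ({0, v0} \<union> range v) = CARD('d) + 2"
    and gen: "\<forall>x :: int^'d. \<exists>c :: int^'d \<Rightarrow> int. x = (\<Sum>y\<in>{0, v0} \<union> range v. c y *s y)"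
    and indep: "\<forall>c :: 'd \<Rightarrow> int. (\<Sum>i\<in>UNIV. c i *s v i) = 0 \<longrightarrow> (\<forall>i. c i = 0)"
  shows "\<forall>a j h :: nat. Aset v0 v j h \<inter> Aset v0 v (j + a * ordv v0 v) h =
           (\<lambda>x. of_nat j *s v0 + of_nat a *s wpt v0 v + x) `
             Cset v (int h - int j - int a * Hval v0 v)"
proof -
  have indep': "int_indep v"
    using indep unfolding int_indep_def .
  obtain c where c: "of_nat (ordv v0 v) *s v0 = int_comb v c"
    using ordv_in_zspan[OF indep'] unfolding zspan_eq_range by blast
  show ?thesis
    using Aset_Int_Aset_shift[OF indep' c] unfolding wpt_eq[OF indep' c] Hval_eq[OF indep' c] by blast
qed

end
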